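(* Let $n\ge 2$. The subgroup of $(n-2)$-decomposable braids in $P_n$, namely $\bigcap_{S\subseteq N,\ |S|=n-2} Q_S$, equals the commutator subgroup $[P_n,P_n]$ of $P_n$.
   Context: $P_n$ denotes the pure braid group on $n$ strands, generated by elements $p_{a,b}$ for $1\le a<b\le n$ subject to the relations: (A) $p_{a,b}p_{a,c}p_{b,c}=p_{a,c}p_{b,c}p_{a,b}=p_{b,c}p_{a,b}p_{a,c}$ for $1\le a<b<c\le n$; (B) $p_{a,b}p_{c,d}=p_{c,d}p_{a,b}$ and $p_{a,d}p_{b,c}=p_{b,c}p_{a,d}$ for $1\le a<b<c<d\le n$; (C) $p_{a,c}p_{b,c}^{-1}p_{b,d}p_{b,c}=p_{b,c}^{-1}p_{b,d}p_{b,c}p_{a,c}$ for $1\le a<b<c<d\le n$. Let $N=\{1,\dots,n\}$. For $S\subseteq N$, $Q_S$ is the subgroup generated by the $p_{a,b}$ with $a\in S$ or $b\in S$ (with $Q_\emptyset$ trivial). A braid is $k$-decomposable if it lies in $Q_S$ for every $S\subseteq N$ with $|S|=k$. *)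

theory Defs
  imports "HOL-Algebra.Algebra"
begin

text \<open>Pure braid group P_n given by its presentation. A letter is a pair
 ((a,b), s): the generator p_{a,b} if s = True, its inverse if s = False.\<close>

type_synonym letter = "(nat \<times> nat) \<times> bool"

definition pb_gens :: "nat \<Rightarrow> (nat \<times> nat) set" where
  "pb_gens n = {(a,b). 1 \<le> a \<and> a < b \<and> b \<le> n}"

definition pg :: "nat \<Rightarrow> nat \<Rightarrow> letter" where "pg a b = ((a,b), True)"
definition pgi :: "nat \<Rightarrow> nat \<Rightarrow> letter" where "pgi a b = ((a,b), False)"

definition linv :: "letter \<Rightarrow> letter" where "linv x = (fst x, \<not> snd x)"

inductive pb_rel :: "nat \<Rightarrow> letter list \<Rightarrow> letter list \<Rightarrow> bool" for n where
  A1: "1 \<le> a \<Longrightarrow> a < b \<Longrightarrow> b < c \<Longrightarrow> c \<le> n \<Longrightarrow>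
       pb_rel n [pg a b, pg a c, pg b c] [pg a c, pg b c, pg a b]"
| A2: "1 \<le> a \<Longrightarrow> a < b \<Longrightarrow> b < c \<Longrightarrow> c \<le> n \<Longrightarrow>
       pb_rel n [pg a c, pg b c, pg a b] [pg b c, pg a b, pg a c]"
| B1: "1 \<le> a \<Longrightarrow> a < b \<Longrightarrow> b < c \<Longrightarrow> c < d \<Longrightarrow> d \<le> n \<Longrightarrow>
       pb_rel n [pg a b, pg c d] [pg c d, pg a b]"
| B2: "1 \<le> a \<Longrightarrow> a < b \<Longrightarrow> b < c \<Longrightarrow> c < d \<Longrightarrow> d \<le> n \<Longrightarrow>
       pb_rel n [pg a d, pg b c] [pg b c, pg a d]"
| C: "1 \<le> a \<Longrightarrow> a < b \<Longrightarrow> b < c \<Longrightarrow> c < d \<Longrightarrow> d \<le> n \<Longrightarrow>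
       pb_rel n [pg a c, pgi b c, pg b d, pg b c] [pgi b c, pg b d, pg b c, pg a c]"

inductive pb_eq :: "nat \<Rightarrow> letter list \<Rightarrow> letter list \<Rightarrow> bool" for n where
  refl: "pb_eq n w w"
| sym: "pb_eq n u v \<Longrightarrow> pb_eq n v u"
| trans: "pb_eq n u v \<Longrightarrow> pb_eq n v w \<Longrightarrow> pb_eq n u w"
| cancel: "fst x \<in> pb_gens n \<Longrightarrow> pb_eq n (u @ [x, linv x] @ v) (u @ v)"
| rel: "pb_rel n l r \<Longrightarrow> pb_eq n (u @ l @ v) (u @ r @ v)"

definition pb_words :: "nat \<Rightarrow> letter list set" where
  "pb_words n = {w. \<forall>x \<in> set w. fst x \<in> pb_gens n}"

definition pb_class :: "nat \<Rightarrow> letter list \<Rightarrow> letter list set" where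
  "pb_class n w = {v. pb_eq n w v}"

definition pb_mult :: "nat \<Rightarrow> letter list set \<Rightarrow> letter list set \<Rightarrow> letter list set" where
  "pb_mult n A B = pb_class n ((SOME u. u \<in> A) @ (SOME v. v \<in> B))"

definition PB :: "nat \<Rightarrow> letter list set monoid" where
  "PB n = \<lparr>carrier = pb_class n ` pb_words n, monoid.mult = pb_mult n, monoid.one = pb_class n []\<rparr>"

definition pbgen :: "nat \<Rightarrow> nat \<Rightarrow> nat \<Rightarrow> letter list set" where
  "pbgen n a b = pb_class n [pg a b]"

definition QS :: "nat \<Rightarrow> nat set \<Rightarrow> letter list set set" where
  "QS n S = generate (PB n) {pbgen n a b | a b. (a,b) \<in> pb_gens n \<and> (a \<in> S \<or> b \<in> S)}"

definition decomposable :: "nat \<Rightarrow> nat \<Rightarrow> letter list set \<Rightarrow> bool" where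
  "decomposable n k x \<longleftrightarrow> x \<in> carrier (PB n) \<and>
     (\<forall>S. S \<subseteq> {1..n} \<and> card S = k \<longrightarrow> x \<in> QS n S)"

end

(* For |S| = n - 2 the complement of S is a pair {i, j} with i < j, and Q_S is generated by all
   generators except p_ij. Going through the relative positions of {a, b} and {i, j}, the
   relations show that conjugation by p_ij and by its inverse maps every other generator p_ab
   into Q_S: by (B) the two commute, (A) applies when the pairs share an index, and (C) together
   with (A) handles crossing pairs. Hence every braid is q p_ij^e with q in Q_S and e the exponent
   sum of p_ij in any word representing it; commutators have e = 0, so they lie in Q_S.
   Conversely the exponent sum of p_ij vanishes on Q_S, so a braid in every Q_S has all exponent
   sums zero, and a word with all exponent sums zero is a product of commutators: its first
   letter x is cancelled by a later x^-1, and x u x^-1 v is congruent to u v modulo commutators. *)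

theory Submission
  imports Defs
begin

lemma pb_eq_in_context: "pb_eq n u v \<Longrightarrow> pb_eq n (w @ u @ z) (w @ v @ z)"
proof (induction rule: pb_eq.induct)
  case (refl u)
  show ?case by (rule pb_eq.refl)
next
  case (sym u v)
  then show ?case by (blast intro: pb_eq.sym)
next
  case (trans u v v')
  then show ?case by (blast intro: pb_eq.trans)
next
  case (cancel x u v)
  then show ?case using pb_eq.cancel[of x n "w @ u" "v @ z"] by simp
next
  case (rel l r u v)
  then show ?case using pb_eq.rel[of n l r "w @ u" "v @ z"] by simp
qed

lemma pb_eq_append: "pb_eq n u u' \<Longrightarrow> pb_eq n v v' \<Longrightarrow> pb_eq n (u @ v) (u' @ v')"
  using pb_eq_in_context[of n u u' "[]" v] pb_eq_in_context[of n v v' u' "[]"]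
  by (auto intro: pb_eq.trans)

lemma pb_class_eq_iff: "pb_class n u = pb_class n v \<longleftrightarrow> pb_eq n u v"
proof
  assume "pb_class n u = pb_class n v"
  then show "pb_eq n u v"
    unfolding pb_class_def by (metis mem_Collect_eq pb_eq.refl)
next
  assume "pb_eq n u v"
  then show "pb_class n u = pb_class n v"
    unfolding pb_class_def by (auto intro: pb_eq.trans pb_eq.sym)
qed

lemma PB_mult_class [simp]: "pb_class n u \<otimes>\<^bsub>PB n\<^esub> pb_class n v = pb_class n (u @ v)"
proof -
  have rep: "pb_eq n w (SOME w'. w' \<in> pb_class n w)" for w
    using someI[of "\<lambda>w'. w' \<in> pb_class n w" w] by (simp add: pb_class_def pb_eq.refl)
  have "pb_eq n (u @ v) ((SOME u'. u' \<in> pb_class n u) @ (SOME v'. v' \<in> pb_class n v))"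
    by (rule pb_eq_append[OF rep rep])
  then show ?thesis
    unfolding PB_def by (simp add: pb_mult_def pb_class_eq_iff pb_eq.sym)
qed

lemma PB_one: "\<one>\<^bsub>PB n\<^esub> = pb_class n []"
  by (simp add: PB_def)

lemma carrier_PB: "carrier (PB n) = pb_class n ` pb_words n"
  by (simp add: PB_def)

lemma Nil_pb_words [simp]: "[] \<in> pb_words n"
  by (simp add: pb_words_def)

lemma pb_words_append [simp]: "u @ v \<in> pb_words n \<longleftrightarrow> u \<in> pb_words n \<and> v \<in> pb_words n"
  by (auto simp: pb_words_def)

lemma pb_words_Cons [simp]: "x # w \<in> pb_words n \<longleftrightarrow> fst x \<in> pb_gens n \<and> w \<in> pb_words n"
  by (simp add: pb_words_def)

definition word_inv :: "letter list \<Rightarrow> letter list" where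
  "word_inv w = rev (map linv w)"

lemma word_inv_pb_words [simp]: "word_inv w \<in> pb_words n \<longleftrightarrow> w \<in> pb_words n"
  by (auto simp: pb_words_def word_inv_def linv_def)

lemma pb_eq_word_inv_cancel: "w \<in> pb_words n \<Longrightarrow> pb_eq n (word_inv w @ w) []"
proof (induction w)
  case Nil
  then show ?case by (simp add: word_inv_def pb_eq.refl)
next
  case (Cons x w)
  have "pb_eq n (word_inv w @ [linv x, linv (linv x)] @ w) (word_inv w @ w)"
    using Cons.prems by (intro pb_eq.cancel) (simp add: linv_def)
  then show ?case
    using Cons by (auto simp: word_inv_def linv_def intro: pb_eq.trans)
qed

lemma group_PB: "group (PB n)"
proof (rule groupI)
  fix x
  assume "x \<in> carrier (PB n)"
  then obtain w where "w \<in> pb_words n" "x = pb_class n w"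
    by (auto simp: carrier_PB)
  then show "\<exists>y\<in>carrier (PB n). y \<otimes>\<^bsub>PB n\<^esub> x = \<one>\<^bsub>PB n\<^esub>"
    by (auto simp: carrier_PB PB_one pb_class_eq_iff pb_eq_word_inv_cancel intro!: bexI[of _ "word_inv w"])
qed (auto simp: carrier_PB PB_one intro!: image_eqI)

lemma inv_PB_class: "w \<in> pb_words n \<Longrightarrow> inv\<^bsub>PB n\<^esub> (pb_class n w) = pb_class n (word_inv w)"
  by (intro group.inv_equality[OF group_PB])
    (auto simp: carrier_PB PB_one pb_class_eq_iff pb_eq_word_inv_cancel)

section \<open>Exponent sums\<close>

definition exp_sum :: "nat \<times> nat \<Rightarrow> letter list \<Rightarrow> int" where
  "exp_sum p w = (\<Sum>x\<leftarrow>w. if fst x = p then (if snd x then 1 else -1) else 0)"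

lemma exp_sum_Nil [simp]: "exp_sum p [] = 0"
  and exp_sum_Cons [simp]:
    "exp_sum p (x # w) = (if fst x = p then (if snd x then 1 else -1) else 0) + exp_sum p w"
  and exp_sum_append [simp]: "exp_sum p (u @ v) = exp_sum p u + exp_sum p v"
  by (simp_all add: exp_sum_def)

lemma exp_sum_word_inv [simp]: "exp_sum p (word_inv w) = - exp_sum p w"
  by (induction w) (auto simp: word_inv_def linv_def)

lemma pb_eq_exp_sum: "pb_eq n u v \<Longrightarrow> exp_sum p u = exp_sum p v"
proof (induction rule: pb_eq.induct)
  case (rel l r u v)
  then show ?case
    by (induction rule: pb_rel.induct) (auto simp: pg_def pgi_def)
qed (auto simp: linv_def)

lemma exp_sum_non_generator: "w \<in> pb_words n \<Longrightarrow> p \<notin> pb_gens n \<Longrightarrow> exp_sum p w = 0"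
  by (induction w) auto

lemma inverse_letter_occurs:
  assumes "exp_sum (fst x) (x # w) = 0"
  shows "linv x \<in> set w"
proof (rule ccontr)
  obtain p s where x: "x = (p, s)" by (cases x)
  assume "linv x \<notin> set w"
  then have "if s then 0 \<le> exp_sum p w else exp_sum p w \<le> 0"
    by (induction w) (auto simp: x linv_def)
  then show False
    using assms by (cases p) (auto simp: x split: if_splits)
qed

context group
begin

lemma mult_inv_cancel [simp]: "\<lbrakk>x \<in> carrier G; y \<in> carrier G\<rbrakk> \<Longrightarrow> x \<otimes> (inv x \<otimes> y) = y"
  and inv_mult_cancel [simp]: "\<lbrakk>x \<in> carrier G; y \<in> carrier G\<rbrakk> \<Longrightarrow> inv x \<otimes> (x \<otimes> y) = y"
  by (simp_all add: m_assoc[symmetric])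

lemma conj_mult:
  "\<lbrakk>c \<in> carrier G; x \<in> carrier G; y \<in> carrier G\<rbrakk>
   \<Longrightarrow> c \<otimes> (x \<otimes> y) \<otimes> inv c = (c \<otimes> x \<otimes> inv c) \<otimes> (c \<otimes> y \<otimes> inv c)"
  by (simp add: m_assoc)

lemma conj_inv: "\<lbrakk>c \<in> carrier G; x \<in> carrier G\<rbrakk> \<Longrightarrow> c \<otimes> inv x \<otimes> inv c = inv (c \<otimes> x \<otimes> inv c)"
  by (simp add: m_assoc inv_mult_group)

lemma conj_commuting: "\<lbrakk>c \<in> carrier G; g \<in> carrier G; c \<otimes> g = g \<otimes> c\<rbrakk> \<Longrightarrow> c \<otimes> g \<otimes> inv c = g"
  by (simp add: m_assoc)

lemma inv_commuting:
  assumes "x \<in> carrier G" "g \<in> carrier G" "x \<otimes> g = g \<otimes> x"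
  shows "inv x \<otimes> g = g \<otimes> inv x"
  using assms(1,2) arg_cong[OF assms(3), of "\<lambda>u. inv x \<otimes> u \<otimes> inv x"] by (simp add: m_assoc)

lemma commuting_conj_swap:
  assumes "x \<in> carrier G" "y \<in> carrier G" "k \<in> carrier G"
    and "x \<otimes> (inv k \<otimes> y \<otimes> k) = (inv k \<otimes> y \<otimes> k) \<otimes> x"
  shows "y \<otimes> (k \<otimes> x \<otimes> inv k) = (k \<otimes> x \<otimes> inv k) \<otimes> y"
  using assms(1-3) arg_cong[OF assms(4), of "\<lambda>u. k \<otimes> u \<otimes> inv k"] by (simp add: m_assoc)

lemma int_pow_conj_mult:
  fixes s e :: int
  assumes "t \<in> carrier G" "q \<in> carrier G"
  shows "t [^] s \<otimes> (q \<otimes> t [^] e) = (t [^] s \<otimes> q \<otimes> inv (t [^] s)) \<otimes> t [^] (s + e)"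
  using assms by (simp add: int_pow_mult m_assoc)

lemma cyclic_triple_conj:
  assumes carrier: "x \<in> carrier G" "y \<in> carrier G" "z \<in> carrier G"
    and cyclic: "x \<otimes> y \<otimes> z = y \<otimes> z \<otimes> x" "y \<otimes> z \<otimes> x = z \<otimes> x \<otimes> y"
    and H: "subgroup H G" "y \<in> H" "z \<in> H"
    and c: "c \<in> {x, inv x}" and g: "g \<in> {y, z}"
  shows "c \<otimes> g \<otimes> inv c \<in> H"
proof -
  interpret H: subgroup H G by (rule H(1))
  have cc: "c \<in> carrier G" using c carrier by auto
  \<comment> \<open>c commutes with y z, so it suffices to conjugate one of y and z directly\<close>
  have "x \<otimes> (y \<otimes> z) = (y \<otimes> z) \<otimes> x" using cyclic(1) carrier by (simp add: m_assoc)
  then have "c \<otimes> (y \<otimes> z) = (y \<otimes> z) \<otimes> c" using c carrier inv_commuting by auto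
  then have yz: "(c \<otimes> y \<otimes> inv c) \<otimes> (c \<otimes> z \<otimes> inv c) = y \<otimes> z"
    using conj_commuting conj_mult cc carrier by (metis m_closed)
  have "c \<otimes> y \<otimes> inv c \<in> H \<and> c \<otimes> z \<otimes> inv c \<in> H"
  proof (cases "c = x")
    case True
    have "c \<otimes> y \<otimes> inv c = inv z \<otimes> (z \<otimes> x \<otimes> y) \<otimes> inv x"
      using True carrier by (simp add: m_assoc)
    also have "\<dots> = inv z \<otimes> y \<otimes> z"
      using carrier by (simp add: cyclic(2)[symmetric] m_assoc)
    finally have "c \<otimes> y \<otimes> inv c \<in> H" using H by simp
    moreover have "c \<otimes> z \<otimes> inv c = inv (c \<otimes> y \<otimes> inv c) \<otimes> (y \<otimes> z)"
      using yz cc carrier by (metis inv_closed inv_solve_left m_closed)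
    ultimately show ?thesis using H by simp
  next
    case False
    then have cx: "c = inv x" using c by simp
    have "c \<otimes> z \<otimes> inv c = inv x \<otimes> (z \<otimes> x \<otimes> y) \<otimes> inv y"
      using cx carrier by (simp add: m_assoc)
    also have "\<dots> = inv x \<otimes> (x \<otimes> y \<otimes> z) \<otimes> inv y"
      by (simp add: cyclic)
    also have "\<dots> = y \<otimes> z \<otimes> inv y"
      using carrier by (simp add: m_assoc)
    finally have "c \<otimes> z \<otimes> inv c \<in> H" using H by simp
    moreover have "c \<otimes> y \<otimes> inv c = (y \<otimes> z) \<otimes> inv (c \<otimes> z \<otimes> inv c)"
      using yz cc carrier by (metis inv_closed inv_solve_right m_closed)
    ultimately show ?thesis using H by simp
  qed
  then show ?thesis using g by auto
qed

lemma conj_via_commuting_conjugate: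
  assumes carrier: "x \<in> carrier G" "g \<in> carrier G" "k \<in> carrier G"
    and commute: "x \<otimes> (k \<otimes> g \<otimes> inv k) = (k \<otimes> g \<otimes> inv k) \<otimes> x"
    and H: "subgroup H G" "g \<in> H" "k \<in> H"
    and c: "c \<in> {x, inv x}" "c \<otimes> k \<otimes> inv c \<in> H"
  shows "c \<otimes> g \<otimes> inv c \<in> H"
proof -
  have "c \<otimes> (k \<otimes> g \<otimes> inv k) = (k \<otimes> g \<otimes> inv k) \<otimes> c"
    using c carrier commute inv_commuting by auto
  then have "c \<otimes> (k \<otimes> g \<otimes> inv k) \<otimes> inv c = k \<otimes> g \<otimes> inv k"
    using c carrier by (intro conj_commuting) auto
  moreover have "c \<otimes> g \<otimes> inv c
      = inv (c \<otimes> k \<otimes> inv c) \<otimes> (c \<otimes> (k \<otimes> g \<otimes> inv k) \<otimes> inv c) \<otimes> (c \<otimes> k \<otimes> inv c)"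
    using c carrier by (auto simp: m_assoc inv_mult_group)
  ultimately show ?thesis
    using H c by (simp add: subgroup.m_closed subgroup.m_inv_closed)
qed

lemma generate_conj_closed:
  assumes A: "A \<subseteq> carrier G" and c: "c \<in> carrier G"
    and gens: "\<And>a. a \<in> A \<Longrightarrow> c \<otimes> a \<otimes> inv c \<in> generate G A"
    and q: "q \<in> generate G A"
  shows "c \<otimes> q \<otimes> inv c \<in> generate G A"
  using q
proof (induction rule: generate.induct)
  case one
  then show ?case using c by (simp add: generate.one)
next
  case (incl a)
  then show ?case by (rule gens)
next
  case (inv a)
  then show ?case
    using A c gens by (simp add: conj_inv subset_iff generate_m_inv_closed)
next
  case (eng a b)
  then show ?case
    using A c by (simp add: conj_mult generate_in_carrier subset_iff generate.eng)
qed

lemma derived_conj_mult: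
  assumes carrier: "g \<in> carrier G" "u \<in> carrier G" "v \<in> carrier G"
    and uv: "u \<otimes> v \<in> derived G (carrier G)"
  shows "g \<otimes> u \<otimes> inv g \<otimes> v \<in> derived G (carrier G)"
proof -
  have "g \<otimes> u \<otimes> inv g \<otimes> v = (g \<otimes> u \<otimes> inv g \<otimes> inv u) \<otimes> (u \<otimes> v)"
    using carrier by (simp add: m_assoc)
  moreover have "g \<otimes> u \<otimes> inv g \<otimes> inv u \<in> derived G (carrier G)"
    unfolding derived_def using carrier by (blast intro: generate.incl)
  ultimately show ?thesis
    using uv by (simp add: subgroup.m_closed derived_is_subgroup)
qed

end

section \<open>Conjugation by a generator p_ij preserves Q_S\<close>

lemma adjacent_pairs_triangle:
  fixes i j a b :: nat
  assumes "i < j" "a < b" "(a, b) \<noteq> (i, j)" "a = i \<or> a = j \<or> b = i \<or> b = j"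
  shows "\<exists>x y z. x < y \<and> y < z \<and> {x, y, z} = {i, j, a, b}
    \<and> {(i, j), (a, b)} \<subseteq> {(x, y), (x, z), (y, z)}"
proof -
  have "a \<noteq> i \<or> b \<noteq> j"
    using assms(3) by simp
  then consider "a = i" "b < j" | "a = i" "j < b" | "b = j" "a < i" | "b = j" "i < a" | "b = i" | "a = j"
    using assms(1,2,4) by linarith
  then show ?thesis
  proof cases
    case 1
    then show ?thesis using assms by (intro exI[of _ i] exI[of _ b] exI[of _ j]) auto
  next
    case 2
    then show ?thesis using assms by (intro exI[of _ i] exI[of _ j] exI[of _ b]) auto
  next
    case 3
    then show ?thesis using assms by (intro exI[of _ a] exI[of _ i] exI[of _ j]) auto
  next
    case 4
    then show ?thesis using assms by (intro exI[of _ i] exI[of _ a] exI[of _ j]) auto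
  next
    case 5
    then show ?thesis using assms by (intro exI[of _ a] exI[of _ i] exI[of _ j]) auto
  next
    case 6
    then show ?thesis using assms by (intro exI[of _ i] exI[of _ j] exI[of _ b]) auto
  qed
qed

(* G is PB n under a name, so that the structure notation of the group locale applies. *)
locale pure_braid = group G for G :: "letter list set monoid" (structure) + fixes n :: nat
  assumes G_eq_PB: "G = PB n"
begin

abbreviation P :: "nat \<Rightarrow> nat \<Rightarrow> letter list set" where
  "P a b \<equiv> pbgen n a b"

abbreviation Q :: "nat \<Rightarrow> nat \<Rightarrow> letter list set set" where
  "Q i j \<equiv> QS n ({1..n} - {i, j})"

lemma carrier_eq: "carrier G = pb_class n ` pb_words n"
  by (simp add: G_eq_PB carrier_PB)

lemma class_carrier: "w \<in> pb_words n \<Longrightarrow> pb_class n w \<in> carrier G"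
  by (simp add: carrier_eq)

lemma class_Nil: "pb_class n [] = \<one>"
  by (simp add: G_eq_PB PB_one)

lemma class_append: "pb_class n (u @ v) = pb_class n u \<otimes> pb_class n v"
  by (simp add: G_eq_PB)

lemma class_Cons_Cons: "pb_class n (x # y # w) = pb_class n [x] \<otimes> pb_class n (y # w)"
  using class_append[of "[x]" "y # w"] by simp

lemma inv_class: "w \<in> pb_words n \<Longrightarrow> inv (pb_class n w) = pb_class n (word_inv w)"
  by (simp add: G_eq_PB inv_PB_class)

lemma P_carrier: "(a, b) \<in> pb_gens n \<Longrightarrow> P a b \<in> carrier G"
  by (simp add: pbgen_def pg_def class_carrier)

lemma inv_P: "(a, b) \<in> pb_gens n \<Longrightarrow> inv (P a b) = pb_class n [pgi a b]"
  by (simp add: pbgen_def pg_def pgi_def inv_class word_inv_def linv_def)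

lemma letter_class:
  "(a, b) \<in> pb_gens n \<Longrightarrow> pb_class n [((a, b), s)] = P a b [^] (if s then 1 else - 1 :: int)"
  using inv_P[of a b] P_carrier[of a b] by (simp add: pbgen_def pg_def pgi_def int_pow_neg)

lemma relation_class_eq: "pb_rel n l r \<Longrightarrow> pb_class n l = pb_class n r"
  using pb_eq.rel[of n l r "[]" "[]"] by (simp add: pb_class_eq_iff)

lemma triangle_relations:
  assumes "1 \<le> a" "a < b" "b < c" "c \<le> n"
  shows "P a b \<otimes> P a c \<otimes> P b c = P a c \<otimes> P b c \<otimes> P a b"
    and "P a c \<otimes> P b c \<otimes> P a b = P b c \<otimes> P a b \<otimes> P a c"
proof -
  have "P u v \<in> carrier G" if "(u, v) \<in> {(a, b), (a, c), (b, c)}" for u v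
    using that assms by (intro P_carrier) (auto simp: pb_gens_def)
  then show "P a b \<otimes> P a c \<otimes> P b c = P a c \<otimes> P b c \<otimes> P a b"
    and "P a c \<otimes> P b c \<otimes> P a b = P b c \<otimes> P a b \<otimes> P a c"
    using relation_class_eq[OF pb_rel.A1[OF assms]] relation_class_eq[OF pb_rel.A2[OF assms]]
    by (simp_all add: class_Cons_Cons pbgen_def[symmetric] m_assoc)
qed

lemma commuting_relations:
  assumes "1 \<le> a" "a < b" "b < c" "c < d" "d \<le> n"
  shows "P a b \<otimes> P c d = P c d \<otimes> P a b"
    and "P a d \<otimes> P b c = P b c \<otimes> P a d"
  using relation_class_eq[OF pb_rel.B1[OF assms]] relation_class_eq[OF pb_rel.B2[OF assms]]
  by (simp_all add: class_Cons_Cons pbgen_def[symmetric])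

lemma relation_C:
  assumes "1 \<le> a" "a < b" "b < c" "c < d" "d \<le> n"
  shows "P a c \<otimes> (inv (P b c) \<otimes> P b d \<otimes> P b c) = (inv (P b c) \<otimes> P b d \<otimes> P b c) \<otimes> P a c"
proof -
  have "P u v \<in> carrier G" if "(u, v) \<in> {(a, c), (b, c), (b, d)}" for u v
    using that assms by (intro P_carrier) (auto simp: pb_gens_def)
  moreover have "pb_class n [pgi b c] = inv (P b c)"
    using assms by (intro inv_P[symmetric]) (simp add: pb_gens_def)
  ultimately show ?thesis
    using relation_class_eq[OF pb_rel.C[OF assms]]
    by (simp add: class_Cons_Cons pbgen_def[symmetric] m_assoc)
qed

lemma subgroup_QS: "subgroup (QS n S) G"
  unfolding QS_def G_eq_PB[symmetric] by (rule generate_is_subgroup) (auto intro: P_carrier)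

lemma P_in_Q:
  assumes "(i, j) \<in> pb_gens n" "(a, b) \<in> pb_gens n" "(a, b) \<noteq> (i, j)"
  shows "P a b \<in> Q i j"
  unfolding QS_def using assms
  by (intro generate.incl CollectI exI[of _ a] exI[of _ b]) (auto simp: pb_gens_def)

lemma triangle_conj:
  assumes xyz: "1 \<le> x" "x < y" "y < z" "z \<le> n"
    and pairs: "{(i, j), (a, b)} \<subseteq> {(x, y), (x, z), (y, z)}" "(a, b) \<noteq> (i, j)"
    and c: "c \<in> {P i j, inv (P i j)}"
  shows "c \<otimes> P a b \<otimes> inv c \<in> Q i j"
proof -
  have gens: "(u, v) \<in> pb_gens n" if "(u, v) \<in> {(x, y), (x, z), (y, z)}" for u v
    using that xyz by (auto simp: pb_gens_def)
  have in_Q: "P u v \<in> Q i j" if "(u, v) \<in> {(x, y), (x, z), (y, z)}" "(u, v) \<noteq> (i, j)" for u v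
    using that pairs gens by (intro P_in_Q) auto
  have carrier: "P x y \<in> carrier G" "P x z \<in> carrier G" "P y z \<in> carrier G"
    using gens P_carrier by auto
  note rel = triangle_relations[OF xyz]
  consider "(i, j) = (x, y)" | "(i, j) = (x, z)" | "(i, j) = (y, z)"
    using pairs by auto
  then show ?thesis
  proof cases
    case 1
    show ?thesis
      by (rule cyclic_triple_conj[OF carrier rel subgroup_QS]) (use 1 c pairs xyz in_Q in auto)
  next
    case 2
    show ?thesis
      by (rule cyclic_triple_conj[OF carrier(2,3,1) rel(2) _ subgroup_QS])
        (use 2 c pairs xyz in_Q rel in auto)
  next
    case 3
    show ?thesis
      by (rule cyclic_triple_conj[OF carrier(3,1,2) _ _ subgroup_QS])
        (use 3 c pairs xyz in_Q rel in auto)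
  qed
qed

lemma crossing_conj:
  assumes ij: "(i, j) \<in> pb_gens n" and ab: "(a, b) \<in> pb_gens n"
    and crossing: "a < i \<and> i < b \<and> b < j \<or> i < a \<and> a < j \<and> j < b"
    and c: "c \<in> {P i j, inv (P i j)}"
  shows "c \<otimes> P a b \<otimes> inv c \<in> Q i j"
proof -
  have bounds: "1 \<le> i" "i < j" "j \<le> n" "1 \<le> a" "a < b" "b \<le> n"
    using ij ab by (auto simp: pb_gens_def)
  have abc: "P a b \<in> carrier G" and abQ: "P a b \<in> Q i j" and ijc: "P i j \<in> carrier G"
    using ij ab crossing P_carrier P_in_Q by auto
  \<comment> \<open>by (C), P i j commutes with a conjugate of P a b by a generator of Q i j\<close>
  show ?thesis
    using crossing
  proof
    assume order: "a < i \<and> i < b \<and> b < j"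
    have kc: "P i b \<in> carrier G"
      using bounds order by (intro P_carrier) (simp add: pb_gens_def)
    have "P a b \<otimes> (inv (P i b) \<otimes> P i j \<otimes> P i b) = (inv (P i b) \<otimes> P i j \<otimes> P i b) \<otimes> P a b"
      using bounds order by (intro relation_C) auto
    then have "P i j \<otimes> (P i b \<otimes> P a b \<otimes> inv (P i b)) = (P i b \<otimes> P a b \<otimes> inv (P i b)) \<otimes> P i j"
      by (rule commuting_conj_swap[OF abc ijc kc])
    moreover have "P i b \<in> Q i j"
      using bounds order by (intro P_in_Q) (auto simp: pb_gens_def)
    moreover have "c \<otimes> P i b \<otimes> inv c \<in> Q i j"
      using bounds order by (intro triangle_conj[of i b j] c) auto
    ultimately show ?thesis
      by (intro conj_via_commuting_conjugate[OF ijc abc kc _ subgroup_QS abQ _ c])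
  next
    assume order: "i < a \<and> a < j \<and> j < b"
    have kc: "P a j \<in> carrier G"
      using bounds order by (intro P_carrier) (simp add: pb_gens_def)
    have "P i j \<otimes> (inv (P a j) \<otimes> P a b \<otimes> inv (inv (P a j)))
        = (inv (P a j) \<otimes> P a b \<otimes> inv (inv (P a j))) \<otimes> P i j"
      using bounds order kc by (simp add: relation_C)
    moreover have "P a j \<in> Q i j"
      using bounds order by (intro P_in_Q) (auto simp: pb_gens_def)
    moreover have "c \<otimes> P a j \<otimes> inv c \<in> Q i j"
      using bounds order by (intro triangle_conj[of i a j] c) auto
    moreover have "c \<in> carrier G"
      using c ijc by auto
    ultimately show ?thesis
      using kc by (intro conj_via_commuting_conjugate[OF ijc abc inv_closed[OF kc] _ subgroup_QS abQ _ c(1)])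
        (simp_all add: conj_inv subgroup.m_inv_closed[OF subgroup_QS])
  qed
qed

lemma generator_conj:
  assumes ij: "(i, j) \<in> pb_gens n" and ab: "(a, b) \<in> pb_gens n" "(a, b) \<noteq> (i, j)"
    and c: "c \<in> {P i j, inv (P i j)}"
  shows "c \<otimes> P a b \<otimes> inv c \<in> Q i j"
proof -
  have bounds: "1 \<le> i" "i < j" "j \<le> n" "1 \<le> a" "a < b" "b \<le> n"
    using ij ab by (auto simp: pb_gens_def)
  consider (disjoint) "b < i \<or> j < a \<or> a < i \<and> j < b \<or> i < a \<and> b < j"
    | (crossing) "a < i \<and> i < b \<and> b < j \<or> i < a \<and> a < j \<and> j < b"
    | (adjacent) "a = i \<or> a = j \<or> b = i \<or> b = j"
    by linarith
  then show ?thesis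
  proof cases
    case disjoint
    then have "P i j \<otimes> P a b = P a b \<otimes> P i j"
      using bounds commuting_relations by (metis le_trans less_imp_le_nat)
    then have "c \<otimes> P a b = P a b \<otimes> c"
      using c P_carrier[OF ij] P_carrier[OF ab(1)] inv_commuting by auto
    then have "c \<otimes> P a b \<otimes> inv c = P a b"
      using c P_carrier[OF ij] P_carrier[OF ab(1)] by (intro conj_commuting) auto
    then show ?thesis
      using ij ab P_in_Q by simp
  next
    case crossing
    show ?thesis
      by (rule crossing_conj[OF ij ab(1) crossing c])
  next
    case adjacent
    obtain x y z where xyz: "x < y" "y < z" "{x, y, z} = {i, j, a, b}"
      and pairs: "{(i, j), (a, b)} \<subseteq> {(x, y), (x, z), (y, z)}"
      using adjacent_pairs_triangle[OF bounds(2) bounds(5) ab(2) adjacent] by (elim exE conjE)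
    have "x \<in> {i, j, a, b}" "z \<in> {i, j, a, b}"
      unfolding xyz(3)[symmetric] by simp_all
    then have "1 \<le> x" "z \<le> n"
      using bounds by auto
    then show ?thesis
      by (intro triangle_conj[OF _ xyz(1,2) _ pairs ab(2) c])
  qed
qed

lemma Q_conj_closed:
  assumes ij: "(i, j) \<in> pb_gens n" and c: "c \<in> {P i j, inv (P i j)}" and q: "q \<in> Q i j"
  shows "c \<otimes> q \<otimes> inv c \<in> Q i j"
proof -
  define A where "A = {P a b |a b. (a, b) \<in> pb_gens n \<and> (a \<in> {1..n} - {i, j} \<or> b \<in> {1..n} - {i, j})}"
  have Q_eq: "Q i j = generate G A"
    by (simp add: QS_def A_def G_eq_PB)
  have "A \<subseteq> carrier G"
    using P_carrier by (auto simp: A_def)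
  moreover have "c \<in> carrier G"
    using c P_carrier[OF ij] by auto
  moreover have "c \<otimes> g \<otimes> inv c \<in> generate G A" if "g \<in> A" for g
  proof -
    obtain a b where "g = P a b" "(a, b) \<in> pb_gens n" "(a, b) \<noteq> (i, j)"
      using \<open>g \<in> A\<close> by (auto simp: A_def)
    then have "c \<otimes> g \<otimes> inv c \<in> Q i j"
      using generator_conj[OF ij _ _ c] by blast
    then show ?thesis
      unfolding Q_eq .
  qed
  ultimately show ?thesis
    using q unfolding Q_eq by (rule generate_conj_closed)
qed

section \<open>Q_S and the commutator subgroup\<close>

lemma class_eq_Q_times_pow:
  assumes ij: "(i, j) \<in> pb_gens n"
  shows "w \<in> pb_words n \<Longrightarrow> \<exists>q \<in> Q i j. pb_class n w = q \<otimes> P i j [^] exp_sum (i, j) w"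
proof (induction w)
  case Nil
  show ?case
    using subgroup.one_closed[OF subgroup_QS] by (intro bexI[of _ \<one>]) (simp_all add: class_Nil)
next
  case (Cons x w)
  obtain a b s where x: "x = ((a, b), s)"
    by (metis prod.collapse)
  let ?e = "if s then 1 else - 1 :: int"
  have ab: "(a, b) \<in> pb_gens n" and w: "w \<in> pb_words n"
    using Cons.prems x by auto
  obtain q where q: "q \<in> Q i j" "pb_class n w = q \<otimes> P i j [^] exp_sum (i, j) w"
    using Cons.IH[OF w] by blast
  have qc: "q \<in> carrier G"
    using q(1) subgroup.mem_carrier[OF subgroup_QS] by blast
  have split: "pb_class n (x # w) = P a b [^] ?e \<otimes> (q \<otimes> P i j [^] exp_sum (i, j) w)"
    using class_append[of "[x]" w] by (simp add: x q(2) letter_class[OF ab])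
  show ?case
  proof (cases "(a, b) = (i, j)")
    case True
    have "P i j [^] ?e \<in> {P i j, inv (P i j)}"
      using P_carrier[OF ij] by (simp add: int_pow_neg)
    then have "P i j [^] ?e \<otimes> q \<otimes> inv (P i j [^] ?e) \<in> Q i j"
      by (rule Q_conj_closed[OF ij _ q(1)])
    moreover have "pb_class n (x # w)
        = (P i j [^] ?e \<otimes> q \<otimes> inv (P i j [^] ?e)) \<otimes> P i j [^] exp_sum (i, j) (x # w)"
      using split True x P_carrier[OF ij] qc by (simp add: int_pow_conj_mult)
    ultimately show ?thesis
      by blast
  next
    case False
    then have "exp_sum (i, j) (x # w) = exp_sum (i, j) w"
      by (simp add: x)
    then have "pb_class n (x # w) = (P a b [^] ?e \<otimes> q) \<otimes> P i j [^] exp_sum (i, j) (x # w)"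
      using split P_carrier[OF ab] P_carrier[OF ij] qc by (simp add: m_assoc)
    moreover have "P a b [^] ?e \<otimes> q \<in> Q i j"
      using P_in_Q[OF ij ab False] q(1)
      by (simp add: subgroup_int_pow_closed[OF subgroup_QS] subgroup.m_closed[OF subgroup_QS])
    ultimately show ?thesis
      by blast
  qed
qed

lemma derived_subset_Q:
  assumes ij: "(i, j) \<in> pb_gens n"
  shows "derived G (carrier G) \<subseteq> Q i j"
  unfolding derived_def
proof (rule generate_subgroup_incl[OF _ subgroup_QS], safe)
  fix u v
  assume "u \<in> carrier G" "v \<in> carrier G"
  then obtain w1 w2 where w: "w1 \<in> pb_words n" "u = pb_class n w1" "w2 \<in> pb_words n" "v = pb_class n w2"
    by (auto simp: carrier_eq)
  let ?w = "w1 @ w2 @ word_inv w1 @ word_inv w2"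
  have "u \<otimes> v \<otimes> inv u \<otimes> inv v = pb_class n ?w"
    using w by (simp add: inv_class class_append m_assoc class_carrier)
  moreover have "?w \<in> pb_words n"
    using w by simp
  then obtain q where "q \<in> Q i j" "pb_class n ?w = q \<otimes> P i j [^] exp_sum (i, j) ?w"
    using class_eq_Q_times_pow[OF ij] by blast
  ultimately show "u \<otimes> v \<otimes> inv u \<otimes> inv v \<in> Q i j"
    using subgroup.mem_carrier[OF subgroup_QS] by auto
qed

lemma exp_sum_vanishes_on_QS:
  assumes "pb_class n w \<in> QS n S" "i \<notin> S" "j \<notin> S"
  shows "exp_sum (i, j) w = 0"
proof -
  have "\<exists>v. y = pb_class n v \<and> exp_sum (i, j) v = 0" if "y \<in> QS n S" for y
    using that unfolding QS_def G_eq_PB[symmetric]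
  proof (induction rule: generate.induct)
    case one
    show ?case
      by (intro exI[of _ "[]"]) (simp add: class_Nil)
  next
    case (incl h)
    then obtain a b where "h = P a b" "a \<in> S \<or> b \<in> S"
      by blast
    then show ?case
      using assms(2,3) by (intro exI[of _ "[pg a b]"]) (auto simp: pbgen_def pg_def)
  next
    case (inv h)
    then obtain a b where "h = P a b" "(a, b) \<in> pb_gens n" "a \<in> S \<or> b \<in> S"
      by blast
    then show ?case
      using assms(2,3) by (intro exI[of _ "[pgi a b]"]) (auto simp: inv_P pgi_def)
  next
    case (eng h1 h2)
    then obtain v1 v2 where "h1 = pb_class n v1" "exp_sum (i, j) v1 = 0"
      and "h2 = pb_class n v2" "exp_sum (i, j) v2 = 0"
      by blast
    then show ?case
      by (intro exI[of _ "v1 @ v2"]) (simp add: class_append)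
  qed
  then show ?thesis
    using assms(1) pb_eq_exp_sum by (metis pb_class_eq_iff)
qed

lemma derived_if_exp_sums_vanish:
  "w \<in> pb_words n \<Longrightarrow> (\<forall>p. exp_sum p w = 0) \<Longrightarrow> pb_class n w \<in> derived G (carrier G)"
proof (induction "length w" arbitrary: w rule: less_induct)
  case less
  show ?case
  proof (cases w)
    case Nil
    then show ?thesis
      using subgroup.one_closed[OF derived_is_subgroup] by (simp add: class_Nil)
  next
    case (Cons x r)
    then have "linv x \<in> set r"
      using less.prems(2) inverse_letter_occurs by blast
    then obtain u v where r: "r = u @ linv x # v"
      by (meson split_list)
    have words: "[x] \<in> pb_words n" "u \<in> pb_words n" "v \<in> pb_words n"
      using less.prems(1) Cons r by auto
    have w_split: "w = [x] @ u @ word_inv [x] @ v"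
      by (simp add: Cons r word_inv_def)
    have "pb_class n (u @ v) \<in> derived G (carrier G)"
    proof (rule less.hyps)
      show "length (u @ v) < length w" "u @ v \<in> pb_words n"
        using words by (simp_all add: Cons r)
      have "exp_sum p (u @ v) = exp_sum p w" for p
        unfolding w_split exp_sum_append exp_sum_word_inv by simp
      then show "\<forall>p. exp_sum p (u @ v) = 0"
        using less.prems(2) by simp
    qed
    then show ?thesis
      unfolding w_split class_append inv_class[OF words(1), symmetric]
      using words by (simp add: derived_conj_mult class_carrier m_assoc[symmetric])
  qed
qed

theorem Inter_Q_eq_derived:
  assumes "2 \<le> n"
  shows "(\<Inter>(i, j) \<in> pb_gens n. Q i j) = derived G (carrier G)"
proof
  show "derived G (carrier G) \<subseteq> (\<Inter>(i, j) \<in> pb_gens n. Q i j)"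
    using derived_subset_Q by blast
next
  show "(\<Inter>(i, j) \<in> pb_gens n. Q i j) \<subseteq> derived G (carrier G)"
  proof
    fix y
    assume y: "y \<in> (\<Inter>(i, j) \<in> pb_gens n. Q i j)"
    have "(1, 2) \<in> pb_gens n"
      using assms by (simp add: pb_gens_def)
    then have "y \<in> carrier G"
      using y subgroup.mem_carrier[OF subgroup_QS] by blast
    then obtain w where w: "w \<in> pb_words n" "y = pb_class n w"
      by (auto simp: carrier_eq)
    have "exp_sum p w = 0" for p
    proof (cases "p \<in> pb_gens n")
      case True
      then obtain i j where "p = (i, j)" "y \<in> Q i j"
        using y by blast
      then show ?thesis
        using w(2) by (auto intro: exp_sum_vanishes_on_QS)
    qed (rule exp_sum_non_generator[OF w(1)])
    then show "y \<in> derived G (carrier G)"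
      using w derived_if_exp_sums_vanish by blast
  qed
qed

end

lemma pure_braid_PB: "pure_braid (PB n) n"
  by (simp add: pure_braid_def pure_braid_axioms_def group_PB)

lemma subsets_of_card_n_minus_2:
  assumes "2 \<le> n"
  shows "{S. S \<subseteq> {1..n} \<and> card S = n - 2} = (\<lambda>(i, j). {1..n} - {i, j}) ` pb_gens n"
proof (intro equalityI subsetI)
  fix S
  assume "S \<in> {S. S \<subseteq> {1..n} \<and> card S = n - 2}"
  then have S: "S \<subseteq> {1..n}" "card ({1..n} - S) = 2"
    using assms by (auto simp: card_Diff_subset finite_subset)
  then obtain x y where xy: "{1..n} - S = {x, y}" "x \<noteq> y"
    by (auto simp: card_2_iff)
  then have "(min x y, max x y) \<in> pb_gens n" "S = {1..n} - {min x y, max x y}"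
    using S(1) by (auto simp: pb_gens_def min_def max_def)
  then show "S \<in> (\<lambda>(i, j). {1..n} - {i, j}) ` pb_gens n"
    by force
next
  fix S
  assume "S \<in> (\<lambda>(i, j). {1..n} - {i, j}) ` pb_gens n"
  then show "S \<in> {S. S \<subseteq> {1..n} \<and> card S = n - 2}"
    by (auto simp: pb_gens_def card_Diff_subset)
qed

theorem corollary2p4:
  fixes n :: nat
  assumes "n \<ge> 2"
  shows "(\<Inter>S \<in> {S. S \<subseteq> {1..n} \<and> card S = n - 2}. QS n S) = derived (PB n) (carrier (PB n))"
proof -
  have "(\<Inter>S \<in> {S. S \<subseteq> {1..n} \<and> card S = n - 2}. QS n S) = (\<Inter>(i, j) \<in> pb_gens n. QS n ({1..n} - {i, j}))"
    unfolding subsets_of_card_n_minus_2[OF assms] by (simp add: image_image split_def)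
  also have "\<dots> = derived (PB n) (carrier (PB n))"
    by (rule pure_braid.Inter_Q_eq_derived[OF pure_braid_PB assms])
  finally show ?thesis .
qed

end
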